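(* Let $\mu$ be a complex Borel measure of bounded total variation on $\mathbb{T}$ with $D_n(\mu)\neq0$ for all $n\ge1$, and suppose its Baxter parameters satisfy $\sum_{n}|\alpha_n|^2<\infty$ and $\sum_n|\beta_n|^2<\infty$. If $z=e^{i\theta}\in E\cap M$, then $\lim_{n\to\infty}u_n(e^{i\theta})$ exists and is finite. Likewise, if $z=e^{i\theta}\in\tilde E\cap M$, then $\lim_{n\to\infty}v_n(e^{i\theta})$ exists and is finite.
   Context: Moments $\mu_k=\int_{\mathbb{T}}\zeta^{-k}d\mu(\zeta)$; $D_n(\mu)=\det(\mu_{i-j})_{i,j=0}^{n-1}$, $D_0=1$. Baxter parameters: $\beta_n=(-1)^nD_n(\zeta\mu)/D_n(\mu)$, $\alpha_n=(-1)^nD_n(\zeta^{-1}\mu)/D_n(\mu)$, where $\zeta\mu$, $\zeta^{-1}\mu$ are the measures $\zeta\,d\mu(\zeta)$, $\zeta^{-1}d\mu(\zeta)$. The polynomials: $u_n(z)=\frac{1}{D_{n+1}(\mu)}\det A_n(z)$, where $A_n(z)$ is the $(n+1)\times(n+1)$ matrix whose rows $i=0,\dots,n-1$ are $(\mu_{-i},\mu_{-i+1},\dots,\mu_{-i+n})$ and whose last row is $(z^n,z^{n-1},\dots,1)$; $v_n(z)=\frac1{D_{n+1}(\mu)}\det B_n(z)$, where $B_n(z)$ has rows $i=0,\dots,n-1$ equal to $(\mu_i,\mu_{i-1},\dots,\mu_{i-n})$ and last row $(z^{-n},z^{-n+1},\dots,1)$. Define $q_{21}(z,n)=-\sum_{k=n+1}^\infty\alpha_kz^{k-n}$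 and $\tilde q_{21}(z,n)=-\sum_{k=n+1}^\infty\beta_kz^{n-k}$. Sets on $\mathbb{T}$: $M=\{z=e^{i\theta}:\ \sum_{k\ge1}\beta_kz^{-k}\text{ and }\sum_{k\ge1}\alpha_kz^k\text{ both converge}\}$ (i.e. $|\sum_{k=1}^\infty\beta_kz^{-k}|+|\sum_{k=1}^\infty\alpha_kz^k|<\infty$); $E=\{z=e^{i\theta}:\sum_{k=0}^\infty|\beta_{k+1}q_{21}(z,k)|<\infty\}$; $\tilde E=\{z=e^{i\theta}:\sum_{k=0}^\infty|\alpha_{k+1}\tilde q_{21}(z,k)|<\infty\}$. *)

theory Defs
  imports "HOL-Analysis.Analysis" "Jordan_Normal_Form.Determinant"
begin

text \<open>A complex Borel measure of bounded total variation on the unit circle is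
represented in polar/density form: mu = h nu, where nu is a finite positive Borel
measure on the complex plane concentrated on the unit circle and h is
nu-integrable.\<close>

definition cmeasure_on_circle :: "complex measure \<Rightarrow> (complex \<Rightarrow> complex) \<Rightarrow> bool" where
  "cmeasure_on_circle \<nu> h \<longleftrightarrow> sets \<nu> = sets borel \<and> finite_measure \<nu> \<and>
     emeasure \<nu> (- sphere 0 1) = 0 \<and> integrable \<nu> h"

definition moment :: "complex measure \<Rightarrow> (complex \<Rightarrow> complex) \<Rightarrow> int \<Rightarrow> complex" where
  "moment \<nu> h k = (LINT \<zeta>|\<nu>. \<zeta> powi (-k) * h \<zeta>)"

definition toeplitz_det :: "(int \<Rightarrow> complex) \<Rightarrow> nat \<Rightarrow> complex" where
  "toeplitz_det m n = Determinant.det (Matrix.mat n n (\<lambda>(i,j). m (int i - int j)))"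

definition Dn :: "complex measure \<Rightarrow> (complex \<Rightarrow> complex) \<Rightarrow> nat \<Rightarrow> complex" where
  "Dn \<nu> h n = toeplitz_det (moment \<nu> h) n"

definition baxter_beta :: "complex measure \<Rightarrow> (complex \<Rightarrow> complex) \<Rightarrow> nat \<Rightarrow> complex" where
  "baxter_beta \<nu> h n = (-1) ^ n * Dn \<nu> (\<lambda>\<zeta>. \<zeta> * h \<zeta>) n / Dn \<nu> h n"

definition baxter_alpha :: "complex measure \<Rightarrow> (complex \<Rightarrow> complex) \<Rightarrow> nat \<Rightarrow> complex" where
  "baxter_alpha \<nu> h n = (-1) ^ n * Dn \<nu> (\<lambda>\<zeta>. inverse \<zeta> * h \<zeta>) n / Dn \<nu> h n"

definition u_poly :: "complex measure \<Rightarrow> (complex \<Rightarrow> complex) \<Rightarrow> nat \<Rightarrow> complex \<Rightarrow> complex" where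
  "u_poly \<nu> h n z = Determinant.det (Matrix.mat (n+1) (n+1) (\<lambda>(i,j).
      if i < n then moment \<nu> h (int j - int i) else z ^ (n - j))) / Dn \<nu> h (n+1)"

definition v_poly :: "complex measure \<Rightarrow> (complex \<Rightarrow> complex) \<Rightarrow> nat \<Rightarrow> complex \<Rightarrow> complex" where
  "v_poly \<nu> h n z = Determinant.det (Matrix.mat (n+1) (n+1) (\<lambda>(i,j).
      if i < n then moment \<nu> h (int i - int j) else z powi (int j - int n))) / Dn \<nu> h (n+1)"

definition q21 :: "(nat \<Rightarrow> complex) \<Rightarrow> complex \<Rightarrow> nat \<Rightarrow> complex" where
  "q21 \<alpha> z n = - (\<Sum>j. \<alpha> (n + 1 + j) * z ^ (j + 1))"

definition q21_tilde :: "(nat \<Rightarrow> complex) \<Rightarrow> complex \<Rightarrow> nat \<Rightarrow> complex" where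
  "q21_tilde \<beta> z n = - (\<Sum>j. \<beta> (n + 1 + j) * z powi (- int (j + 1)))"

definition set_M :: "(nat \<Rightarrow> complex) \<Rightarrow> (nat \<Rightarrow> complex) \<Rightarrow> complex set" where
  "set_M \<alpha> \<beta> = {z. cmod z = 1 \<and> summable (\<lambda>k. \<beta> (k+1) * z powi (- int (k+1)))
                     \<and> summable (\<lambda>k. \<alpha> (k+1) * z ^ (k+1))}"

definition set_E :: "(nat \<Rightarrow> complex) \<Rightarrow> (nat \<Rightarrow> complex) \<Rightarrow> complex set" where
  "set_E \<alpha> \<beta> = {z. cmod z = 1 \<and> (\<forall>n. summable (\<lambda>j. \<alpha> (n + 1 + j) * z ^ (j + 1)))
                     \<and> summable (\<lambda>k. cmod (\<beta> (k+1) * q21 \<alpha> z k))}"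

definition set_E_tilde :: "(nat \<Rightarrow> complex) \<Rightarrow> (nat \<Rightarrow> complex) \<Rightarrow> complex set" where
  "set_E_tilde \<alpha> \<beta> = {z. cmod z = 1 \<and> (\<forall>n. summable (\<lambda>j. \<beta> (n + 1 + j) * z powi (- int (j + 1))))
                     \<and> summable (\<lambda>k. cmod (\<alpha> (k+1) * q21_tilde \<beta> z k))}"

end

theory Submission
  imports Defs
begin

text \<open>Write u_n = (D_n / D_(n+1)) P_n and let Q_n be the analogous polynomials for the reflected
  moments k \<mapsto> mu_(-k), so that v_n(z) = (D_n / D_(n+1)) Q_n(1/z). These satisfy Szeg\<odieresis>'s recursion
  P_(n+1)(z) = P_n(z) + alpha_(n+1) z^(n+1) Q_n(1/z) and Q_(n+1)(w) = Q_n(w) + beta_(n+1) w^(n+1) P_n(1/w),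
  and D_(n+2)/D_(n+1) = (D_(n+1)/D_n) (1 - alpha_(n+1) beta_(n+1)). The l^2 hypotheses make
  alpha_n beta_n absolutely summable, so D_n/D_(n+1) converges as an infinite product.

  On the circle, p_n = P_n(z) and q_n = Q_n(1/z) obey p_(n+1) = p_n + A_(n+1) q_n and
  q_(n+1) = q_n + B_(n+1) p_n with A_k = alpha_k z^k and B_k = beta_k z^(-k), series that converge only
  conditionally (this is z \<in> M). Summation by parts against the tails of the A-series, whose products
  with B are absolutely summable exactly when z \<in> E, leaves absolutely summable perturbations; a
  discrete Gronwall bound makes p_n and q_n bounded, and then p_n converges. Since E-tilde at z is E
  at 1/z with the roles of the moments and the reflected moments exchanged, the same argument
  gives the statement for v_n.\<close>

section \<open>Series, products and a discrete Gronwall inequality\<close>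

lemma convergent_if_summable_diff:
  fixes x :: "nat \<Rightarrow> 'a::banach"
  assumes "summable (\<lambda>n. x (Suc n) - x n)"
  shows "convergent x"
proof -
  have "(\<lambda>n. x 0 + (\<Sum>i<n. x (Suc i) - x i)) \<longlonglongrightarrow> x 0 + (\<Sum>n. x (Suc n) - x n)"
    by (intro tendsto_add tendsto_const summable_LIMSEQ assms)
  then show ?thesis
    by (auto simp: sum_lessThan_telescope convergent_def)
qed

lemma discrete_gronwall:
  fixes s d :: "nat \<Rightarrow> real"
  assumes s0: "0 \<le> s 0" and d: "\<And>n. 0 \<le> d n" "summable d"
    and s_Suc: "\<And>n. s (Suc n) \<le> (1 + d n) * s n"
  shows "s n \<le> s 0 * exp (suminf d)"
proof -
  have "s n \<le> s 0 * exp (\<Sum>i<n. d i)"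
  proof (induction n)
    case (Suc n)
    have "s (Suc n) \<le> (1 + d n) * (s 0 * exp (\<Sum>i<n. d i))"
      using s_Suc[of n] Suc d(1)[of n] by (smt (verit) mult_left_mono)
    also have "\<dots> \<le> exp (d n) * (s 0 * exp (\<Sum>i<n. d i))"
      using s0 by (intro mult_right_mono exp_ge_add_one_self) auto
    finally show ?case
      by (simp add: exp_add mult_ac)
  qed simp
  also have "\<dots> \<le> s 0 * exp (suminf d)"
    using s0 sum_le_suminf[OF d(2), of "{..<n}"] d(1) by (intro mult_left_mono) auto
  finally show ?thesis .
qed

lemma convergent_inverse_if_product_recurrence:
  fixes g t :: "nat \<Rightarrow> 'a::{real_normed_field,banach}"
  assumes g_Suc: "\<And>n. g (Suc n) = g n * (1 - t n)" and g_nonzero: "\<And>n. g n \<noteq> 0"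
    and t: "summable (\<lambda>n. norm (t n))"
  shows "convergent (\<lambda>n. inverse (g n))"
proof -
  define f where "f i = 1 - t i" for i
  have g_eq: "g n = g 0 * (\<Prod>i<n. f i)" for n
    by (induction n) (simp_all add: g_Suc f_def)
  have f_nonzero: "f i \<noteq> 0" for i
    using g_nonzero[of "Suc i"] g_Suc[of i] by (auto simp: f_def)
  have "abs_convergent_prod f"
    using t by (simp add: abs_convergent_prod_conv_summable f_def)
  then have f: "convergent_prod f"
    by (rule abs_convergent_prod_imp_convergent_prod)
  then have "(\<lambda>n. \<Prod>i<n. f i) \<longlonglongrightarrow> prodinf f"
    by (simp add: convergent_prod_LIMSEQ LIMSEQ_lessThan_iff_atMost)
  then have "(\<lambda>n. inverse (g 0 * (\<Prod>i<n. f i))) \<longlonglongrightarrow> inverse (g 0 * prodinf f)"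
    using g_nonzero[of 0] prodinf_nonzero[OF f f_nonzero]
    by (intro tendsto_inverse tendsto_mult tendsto_const) auto
  then show ?thesis
    by (simp only: g_eq[symmetric] convergentI)
qed

lemma summable_norm_mult_if_square_summable:
  fixes a b :: "nat \<Rightarrow> 'a::real_normed_algebra"
  assumes "summable (\<lambda>n. (norm (a n))\<^sup>2)" "summable (\<lambda>n. (norm (b n))\<^sup>2)"
  shows "summable (\<lambda>n. norm (a n * b n))"
proof (rule summable_comparison_test')
  show "summable (\<lambda>n. (norm (a n))\<^sup>2 + (norm (b n))\<^sup>2)"
    using assms by (rule summable_add)
  show "norm (norm (a n * b n)) \<le> (norm (a n))\<^sup>2 + (norm (b n))\<^sup>2" for n
  proof -
    have "norm (a n * b n) \<le> (norm (a n))\<^sup>2 + (norm (b n))\<^sup>2"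
      using norm_mult_ineq[of "a n" "b n"]
        sum_squares_bound[of "norm (a n)" "norm (b n)", unfolded mult.assoc]
        mult_nonneg_nonneg[OF norm_ge_zero norm_ge_zero, of "a n" "b n"]
      by linarith
    then show ?thesis
      by simp
  qed
qed

definition tail_sum :: "(nat \<Rightarrow> 'a::real_normed_vector) \<Rightarrow> nat \<Rightarrow> 'a" where
  "tail_sum f k = (\<Sum>j. f (Suc k + j))"

lemma tail_sum_eq_diff:
  assumes "summable f"
  shows "tail_sum f k = suminf f - (\<Sum>i<Suc k. f i)"
  using suminf_split_initial_segment[OF assms, of "Suc k"]
  by (simp add: tail_sum_def add.commute)

lemma tail_sum_Suc:
  assumes "summable f"
  shows "tail_sum f k = f (Suc k) + tail_sum f (Suc k)"
  by (simp add: tail_sum_eq_diff[OF assms])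

lemma tail_sum_tendsto_0:
  assumes "summable f"
  shows "tail_sum f \<longlonglongrightarrow> 0"
proof -
  have "tail_sum f = (\<lambda>k. suminf f - (\<Sum>i<Suc k. f i))"
    using tail_sum_eq_diff[OF assms] by (rule ext)
  moreover have "(\<lambda>k. suminf f - (\<Sum>i<Suc k. f i)) \<longlonglongrightarrow> suminf f - suminf f"
    by (intro tendsto_diff tendsto_const LIMSEQ_Suc summable_LIMSEQ assms)
  ultimately show ?thesis
    by simp
qed

section \<open>Coupled recurrences with conditionally summable coefficients\<close>

locale coupled_recurrence =
  fixes p q A B :: "nat \<Rightarrow> 'a::{real_normed_field,banach}"
  assumes p_Suc: "p (Suc n) = p n + A (Suc n) * q n"
    and q_Suc: "q (Suc n) = q n + B (Suc n) * p n"
    and summable_A: "summable A" and summable_B: "summable B"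
    and summable_norm_AB: "summable (\<lambda>n. norm (A n * B n))"
    and summable_norm_B_tail_A: "summable (\<lambda>n. norm (B (Suc n) * tail_sum A n))"
begin

text \<open>Summation by parts: passing from \<open>p\<close> to \<open>p'\<close> trades the conditionally summable \<open>A\<close>
  for the absolutely summable products \<open>B (Suc n) * tail_sum A (Suc n)\<close>.\<close>

definition p' :: "nat \<Rightarrow> 'a" where
  "p' n = p n + tail_sum A n * q n"

definition q' :: "nat \<Rightarrow> 'a" where
  "q' n = q n + tail_sum B n * p' n"

lemma p'_Suc: "p' (Suc n) = p' n + B (Suc n) * tail_sum A (Suc n) * p n"
  unfolding p'_def p_Suc q_Suc tail_sum_Suc[OF summable_A, of n] by (simp add: algebra_simps)

lemma q'_Suc:
  "q' (Suc n) = q' n - B (Suc n) * tail_sum A n * q n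
     + tail_sum B (Suc n) * (B (Suc n) * tail_sum A (Suc n) * p n)"
  unfolding q'_def p'_Suc q_Suc tail_sum_Suc[OF summable_B, of n]
  by (simp add: p'_def algebra_simps)

lemma summable_norm_B_tail_A_Suc: "summable (\<lambda>n. norm (B (Suc n) * tail_sum A (Suc n)))"
proof (rule summable_comparison_test')
  show "summable (\<lambda>n. norm (B (Suc n) * tail_sum A n) + norm (A (Suc n) * B (Suc n)))"
    using summable_norm_AB summable_Suc_iff[where f="\<lambda>n. norm (A n * B n)"]
    by (intro summable_add summable_norm_B_tail_A) simp
  show "norm (norm (B (Suc n) * tail_sum A (Suc n)))
      \<le> norm (B (Suc n) * tail_sum A n) + norm (A (Suc n) * B (Suc n))" for n
    using norm_triangle_ineq4[of "B (Suc n) * tail_sum A n" "A (Suc n) * B (Suc n)"]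
    by (simp add: tail_sum_Suc[OF summable_A, of n] algebra_simps)
qed

lemma bounded_tail_sums:
  obtains K where "0 \<le> K" "\<And>n. norm (tail_sum A n) \<le> K" "\<And>n. norm (tail_sum B n) \<le> K"
proof -
  obtain KA KB where "0 < KA" "\<forall>n. norm (tail_sum A n) \<le> KA"
    and "\<forall>n. norm (tail_sum B n) \<le> KB"
    using convergent_imp_Bseq[OF convergentI[OF tail_sum_tendsto_0]] summable_A summable_B
    by (metis BseqE)
  then show ?thesis
    by (intro that[of "max KA KB"]) (auto intro: order_trans)
qed

definition pq'_norm :: "nat \<Rightarrow> real" where
  "pq'_norm n = norm (p' n) + norm (q' n)"

definition perturbation :: "nat \<Rightarrow> real" where
  "perturbation n = norm (B (Suc n) * tail_sum A (Suc n)) + norm (B (Suc n) * tail_sum A n)"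

lemma summable_perturbation: "summable perturbation"
  unfolding perturbation_def by (intro summable_add summable_norm_B_tail_A_Suc summable_norm_B_tail_A)

context
  fixes K :: real
  assumes K: "0 \<le> K" "\<And>n. norm (tail_sum A n) \<le> K" "\<And>n. norm (tail_sum B n) \<le> K"
begin

lemma norm_q_le: "norm (q n) \<le> (1 + K) * pq'_norm n"
proof -
  have "norm (q n) \<le> norm (q' n) + norm (tail_sum B n) * norm (p' n)"
    using norm_triangle_ineq4[of "q' n" "tail_sum B n * p' n"] by (simp add: q'_def norm_mult)
  also have "\<dots> \<le> pq'_norm n + K * pq'_norm n"
    using K by (intro add_mono mult_mono) (auto simp: pq'_norm_def)
  finally show ?thesis
    by (simp add: algebra_simps)
qed

lemma norm_p_le: "norm (p n) \<le> (1 + K)\<^sup>2 * pq'_norm n"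
proof -
  have "norm (p n) \<le> norm (p' n) + norm (tail_sum A n) * norm (q n)"
    using norm_triangle_ineq4[of "p' n" "tail_sum A n * q n"] by (simp add: p'_def norm_mult)
  also have "\<dots> \<le> pq'_norm n + K * ((1 + K) * pq'_norm n)"
    using K norm_q_le[of n] by (intro add_mono mult_mono) (auto simp: pq'_norm_def)
  also have "\<dots> \<le> (1 + K)\<^sup>2 * pq'_norm n"
    using mult_nonneg_nonneg[OF K(1), of "pq'_norm n"]
    by (simp add: pq'_norm_def power2_eq_square algebra_simps)
  finally show ?thesis .
qed

lemma norm_q_le': "norm (q n) \<le> (1 + K)\<^sup>2 * pq'_norm n"
proof -
  have "(1 + K) * pq'_norm n \<le> (1 + K)\<^sup>2 * pq'_norm n"
    using K(1) by (intro mult_right_mono) (auto simp: power2_eq_square pq'_norm_def)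
  then show ?thesis
    using norm_q_le[of n] by linarith
qed

lemma pq'_norm_Suc: "pq'_norm (Suc n) \<le> (1 + (1 + K) ^ 3 * perturbation n) * pq'_norm n"
proof -
  define C where "C = (1 + K)\<^sup>2"
  define \<epsilon> where "\<epsilon> = B (Suc n) * tail_sum A (Suc n)"
  define \<eta> where "\<eta> = B (Suc n) * tail_sum A n"
  have "norm (p' (Suc n)) \<le> norm (p' n) + norm \<epsilon> * norm (p n)"
    using norm_triangle_ineq[of "p' n" "\<epsilon> * p n"] by (simp add: p'_Suc \<epsilon>_def norm_mult)
  moreover have "norm (q' (Suc n)) \<le> norm (q' n) + norm \<eta> * norm (q n)
      + norm (tail_sum B (Suc n)) * (norm \<epsilon> * norm (p n))"
    using norm_triangle_ineq[of "q' n - \<eta> * q n" "tail_sum B (Suc n) * (\<epsilon> * p n)"]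
      norm_triangle_ineq4[of "q' n" "\<eta> * q n"]
    by (simp add: q'_Suc \<epsilon>_def \<eta>_def norm_mult mult.assoc)
  moreover have "norm (tail_sum B (Suc n)) * (norm \<epsilon> * norm (p n)) \<le> K * (norm \<epsilon> * (C * pq'_norm n))"
    using K norm_p_le[of n] by (intro mult_mono mult_left_mono) (auto simp: C_def)
  moreover have "norm \<epsilon> * norm (p n) \<le> norm \<epsilon> * (C * pq'_norm n)"
    using norm_p_le[of n] by (intro mult_left_mono) (auto simp: C_def)
  moreover have "norm \<eta> * norm (q n) \<le> norm \<eta> * (C * pq'_norm n)"
    using norm_q_le'[of n] by (intro mult_left_mono) (auto simp: C_def)
  moreover have "0 \<le> K * (norm \<eta> * (C * pq'_norm n))"
    using K(1) by (simp add: C_def pq'_norm_def)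
  ultimately have "pq'_norm (Suc n) \<le> pq'_norm n + (1 + K) * (norm \<epsilon> + norm \<eta>) * (C * pq'_norm n)"
    by (simp add: pq'_norm_def algebra_simps)
  then show ?thesis
    by (simp add: perturbation_def C_def \<epsilon>_def \<eta>_def power2_eq_square power3_eq_cube algebra_simps)
qed

end

lemma Bseq_p_q: "Bseq p \<and> Bseq q"
proof -
  obtain K where K: "0 \<le> K" "\<And>n. norm (tail_sum A n) \<le> K" "\<And>n. norm (tail_sum B n) \<le> K"
    by (rule bounded_tail_sums) auto
  define S where "S = pq'_norm 0 * exp (suminf (\<lambda>n. (1 + K) ^ 3 * perturbation n))"
  have "pq'_norm n \<le> S" for n
    unfolding S_def using K(1)
    by (intro discrete_gronwall pq'_norm_Suc[OF K] summable_mult summable_perturbation)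
      (auto simp: pq'_norm_def perturbation_def)
  then have "(1 + K)\<^sup>2 * pq'_norm n \<le> (1 + K)\<^sup>2 * S" for n
    by (simp add: mult_left_mono)
  then show ?thesis
    using norm_p_le[OF K] norm_q_le'[OF K] by (meson BseqI' order_trans)
qed

lemma convergent_p: "convergent p"
proof -
  obtain P where P: "\<And>n. norm (p n) \<le> P"
    using Bseq_p_q BseqE by metis
  have "summable (\<lambda>n. norm (p' (Suc n) - p' n))"
  proof (rule summable_comparison_test')
    show "summable (\<lambda>n. norm (B (Suc n) * tail_sum A (Suc n)) * P)"
      by (intro summable_mult2 summable_norm_B_tail_A_Suc)
    show "norm (norm (p' (Suc n) - p' n)) \<le> norm (B (Suc n) * tail_sum A (Suc n)) * P" for n
      using P[of n] by (simp add: p'_Suc norm_mult mult_left_mono)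
  qed
  then obtain L where L: "p' \<longlonglongrightarrow> L"
    using convergent_if_summable_diff summable_norm_cancel convergent_def by metis
  have "Zfun (tail_sum A) sequentially"
    using tail_sum_tendsto_0[OF summable_A] by (simp add: tendsto_Zfun_iff)
  then have "Zfun (\<lambda>n. tail_sum A n * q n) sequentially"
    using Bseq_p_q by (intro bounded_bilinear.Zfun_prod_Bfun[OF bounded_bilinear_mult]) auto
  then have "(\<lambda>n. tail_sum A n * q n) \<longlonglongrightarrow> 0"
    by (simp add: tendsto_Zfun_iff)
  then have "(\<lambda>n. p' n - tail_sum A n * q n) \<longlonglongrightarrow> L - 0"
    by (intro tendsto_diff L)
  then show ?thesis
    by (auto simp: p'_def convergent_def)
qed

end

section \<open>Toeplitz systems and Szeg\<odieresis>'s recursion\<close>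

definition toeplitz_mat :: "(int \<Rightarrow> 'a) \<Rightarrow> nat \<Rightarrow> 'a mat" where
  "toeplitz_mat c n = mat n n (\<lambda>(i, j). c (int j - int i))"

definition reflect_seq :: "(int \<Rightarrow> 'a) \<Rightarrow> int \<Rightarrow> 'a" where
  "reflect_seq c k = c (- k)"

text \<open>szego_coeff c n j is the coefficient of z^(n - j) in u_n normalised to constant term 1
  (see szego_coeff_last and u_poly_eq_szego_poly); by Cramer's rule it solves the Toeplitz system
  of szego_coeff_orthogonal.\<close>

definition szego_coeff :: "(int \<Rightarrow> 'a::field) \<Rightarrow> nat \<Rightarrow> nat \<Rightarrow> 'a" where
  "szego_coeff c n j = cofactor (toeplitz_mat c (Suc n)) n j / det (toeplitz_mat c n)"

definition szego_poly :: "(int \<Rightarrow> 'a::field) \<Rightarrow> 'a \<Rightarrow> nat \<Rightarrow> 'a" where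
  "szego_poly c z n = (\<Sum>j<Suc n. szego_coeff c n j * z ^ (n - j))"

definition toeplitz_ratio :: "(int \<Rightarrow> 'a::field) \<Rightarrow> nat \<Rightarrow> 'a" where
  "toeplitz_ratio c n = det (toeplitz_mat c (Suc n)) / det (toeplitz_mat c n)"

definition szego_pairing :: "(int \<Rightarrow> 'a::field) \<Rightarrow> nat \<Rightarrow> 'a" where
  "szego_pairing c n = (\<Sum>k<Suc n. c (int k + 1) * szego_coeff c n k)"

lemma toeplitz_mat_carrier [simp]: "toeplitz_mat c n \<in> carrier_mat n n"
  by (simp add: toeplitz_mat_def)

lemma toeplitz_mat_dim [simp]:
  "dim_row (toeplitz_mat c n) = n" "dim_col (toeplitz_mat c n) = n"
  by (simp_all add: toeplitz_mat_def)

lemma toeplitz_mat_index [simp]: "i < n \<Longrightarrow> j < n \<Longrightarrow> toeplitz_mat c n $$ (i, j) = c (int j - int i)"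
  by (simp add: toeplitz_mat_def)

lemma reflect_seq_reflect_seq [simp]: "reflect_seq (reflect_seq c) = c"
  by (simp add: reflect_seq_def fun_eq_iff)

lemma det_toeplitz_mat_0 [simp]: "det (toeplitz_mat c 0) = 1"
  by (simp add: toeplitz_mat_def det_dim_zero)

lemma det_toeplitz_mat_transpose:
  "det (mat n n (\<lambda>(i, j). c (int i - int j))) = det (toeplitz_mat c n)"
proof -
  have "mat n n (\<lambda>(i, j). c (int i - int j)) = transpose_mat (toeplitz_mat c n)"
    by (rule eq_matI) auto
  then show ?thesis
    by (simp add: det_transpose[of _ n])
qed

lemma det_toeplitz_mat_reflect_seq [simp]:
  "det (toeplitz_mat (reflect_seq c) n) = det (toeplitz_mat c n)"
proof -
  have "toeplitz_mat (reflect_seq c) n = mat n n (\<lambda>(i, j). c (int i - int j))"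
    by (rule eq_matI) (auto simp: reflect_seq_def)
  then show ?thesis
    by (simp add: det_toeplitz_mat_transpose)
qed

lemma toeplitz_ratio_reflect_seq [simp]: "toeplitz_ratio (reflect_seq c) n = toeplitz_ratio c n"
  by (simp add: toeplitz_ratio_def)

lemma sum_mult_cofactor_row:
  fixes A :: "'a::comm_ring_1 mat"
  assumes "A \<in> carrier_mat n n" "i < n" "j < n"
  shows "(\<Sum>k<n. A $$ (i, k) * cofactor A j k) = (if i = j then det A else 0)"
proof -
  have "(A * adj_mat A) $$ (i, j) = (\<Sum>k<n. A $$ (i, k) * cofactor A j k)"
    using assms by (simp add: scalar_prod_def adj_mat_def atLeast0LessThan)
  then show ?thesis
    using adj_mat(2)[OF assms(1)] assms by (cases "i = j") auto
qed

lemma sum_cofactor_mult_col: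
  fixes A :: "'a::comm_ring_1 mat"
  assumes "A \<in> carrier_mat n n" "i < n" "j < n"
  shows "(\<Sum>k<n. cofactor A k i * A $$ (k, j)) = (if i = j then det A else 0)"
proof -
  have "(adj_mat A * A) $$ (i, j) = (\<Sum>k<n. cofactor A k i * A $$ (k, j))"
    using assms by (simp add: scalar_prod_def adj_mat_def atLeast0LessThan)
  then show ?thesis
    using adj_mat(3)[OF assms(1)] assms by (cases "i = j") auto
qed

lemma szego_coeff_last:
  assumes "det (toeplitz_mat c n) \<noteq> 0"
  shows "szego_coeff c n n = 1"
proof -
  have "mat_delete (toeplitz_mat c (Suc n)) n n = toeplitz_mat c n"
    by (rule eq_matI) (auto simp: mat_delete_def)
  then show ?thesis
    using assms by (simp add: szego_coeff_def cofactor_def flip: mult_2)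
qed

lemma szego_coeff_0:
  "szego_coeff c n 0 = (-1) ^ n * det (mat n n (\<lambda>(i, j). c (int j - int i + 1))) / det (toeplitz_mat c n)"
proof -
  have "mat_delete (toeplitz_mat c (Suc n)) n 0 = mat n n (\<lambda>(i, j). c (int j - int i + 1))"
    by (rule eq_matI) (auto simp: mat_delete_def algebra_simps)
  then show ?thesis
    by (simp add: szego_coeff_def cofactor_def)
qed

lemma szego_coeff_orthogonal:
  assumes "det (toeplitz_mat c n) \<noteq> 0" "i \<le> n"
  shows "(\<Sum>j<Suc n. c (int j - int i) * szego_coeff c n j) = (if i = n then toeplitz_ratio c n else 0)"
proof -
  let ?M = "toeplitz_mat c (Suc n)"
  have "(\<Sum>j<Suc n. c (int j - int i) * szego_coeff c n j)
      = (\<Sum>j<Suc n. ?M $$ (i, j) * cofactor ?M n j) / det (toeplitz_mat c n)"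
    using assms(2) by (simp add: szego_coeff_def sum_divide_distrib del: sum.lessThan_Suc)
  also have "\<dots> = (if i = n then det ?M else 0) / det (toeplitz_mat c n)"
    using assms(2) by (subst sum_mult_cofactor_row) auto
  finally show ?thesis
    by (simp add: toeplitz_ratio_def)
qed

lemma szego_coeff_unique:
  assumes dets: "det (toeplitz_mat c n) \<noteq> 0" "det (toeplitz_mat c (Suc n)) \<noteq> 0"
    and v: "\<And>i. i \<le> n \<Longrightarrow> (\<Sum>k<Suc n. c (int k - int i) * v k) = (if i = n then l else 0)"
    and "j \<le> n"
  shows "v j = l / toeplitz_ratio c n * szego_coeff c n j"
proof -
  let ?M = "toeplitz_mat c (Suc n)"
  have "det ?M * v j = (\<Sum>k<Suc n. if j = k then det ?M * v k else 0)"
    using \<open>j \<le> n\<close> by (simp add: sum.delta del: sum.lessThan_Suc)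
  also have "\<dots> = (\<Sum>k<Suc n. (if j = k then det ?M else 0) * v k)"
    by (intro sum.cong) auto
  also have "\<dots> = (\<Sum>k<Suc n. (\<Sum>i<Suc n. cofactor ?M i j * ?M $$ (i, k)) * v k)"
    using \<open>j \<le> n\<close> by (intro sum.cong refl) (simp add: sum_cofactor_mult_col del: sum.lessThan_Suc toeplitz_mat_index)
  also have "\<dots> = (\<Sum>i<Suc n. cofactor ?M i j * (\<Sum>k<Suc n. ?M $$ (i, k) * v k))"
    unfolding sum_distrib_left sum_distrib_right mult.assoc by (rule sum.swap)
  also have "\<dots> = (\<Sum>i<Suc n. cofactor ?M i j * (if i = n then l else 0))"
    by (intro sum.cong refl) (simp add: v del: sum.lessThan_Suc)
  also have "\<dots> = (\<Sum>i<Suc n. if i = n then cofactor ?M i j * l else 0)"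
    by (intro sum.cong) auto
  also have "\<dots> = cofactor ?M n j * l"
    by (simp add: sum.delta del: sum.lessThan_Suc)
  finally show ?thesis
    using dets by (simp add: szego_coeff_def toeplitz_ratio_def field_simps)
qed

lemma toeplitz_sum_shifted_szego_coeff:
  assumes "det (toeplitz_mat c n) \<noteq> 0" "i \<le> Suc n"
  shows "(\<Sum>j<Suc (Suc n). c (int j - int i) * (if j = 0 then 0 else szego_coeff c n (j - 1)))
       = (if i = 0 then szego_pairing c n else if i = Suc n then toeplitz_ratio c n else 0)"
proof -
  have shift: "(\<Sum>j<Suc (Suc n). c (int j - int i) * (if j = 0 then 0 else szego_coeff c n (j - 1)))
      = (\<Sum>j<Suc n. c (int (Suc j) - int i) * szego_coeff c n j)"
    by (simp only: sum.lessThan_Suc_shift) simp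
  show ?thesis
  proof (cases i)
    case 0
    then show ?thesis
      using shift by (simp add: szego_pairing_def add.commute)
  next
    case (Suc i')
    then show ?thesis
      using shift szego_coeff_orthogonal[OF assms(1), of i'] assms(2) by simp
  qed
qed

lemma toeplitz_sum_reversed_szego_coeff:
  assumes "det (toeplitz_mat c n) \<noteq> 0" "i \<le> Suc n"
  shows "(\<Sum>j<Suc (Suc n). c (int j - int i) * (if j \<le> n then szego_coeff (reflect_seq c) n (n - j) else 0))
       = (if i = 0 then toeplitz_ratio c n else if i = Suc n then szego_pairing (reflect_seq c) n else 0)"
proof -
  let ?b = "szego_coeff (reflect_seq c) n"
  have "(\<Sum>j<Suc (Suc n). c (int j - int i) * (if j \<le> n then ?b (n - j) else 0))
      = (\<Sum>j<Suc n. c (int j - int i) * ?b (n - j))"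
    by (simp del: sum.lessThan_Suc add: sum.lessThan_Suc[of _ "Suc n"])
  also have "\<dots> = (\<Sum>j<Suc n. (\<lambda>k. c (int n - int k - int i) * ?b k) (n - j))"
    by (intro sum.cong) (auto simp: of_nat_diff)
  also have "\<dots> = (\<Sum>k<Suc n. c (int n - int k - int i) * ?b k)"
    using sum.nat_diff_reindex[of "\<lambda>k. c (int n - int k - int i) * ?b k" "Suc n"] by simp
  also have "\<dots> = (if i = 0 then toeplitz_ratio c n else if i = Suc n then szego_pairing (reflect_seq c) n else 0)"
  proof (cases "i = Suc n")
    case True
    then show ?thesis
      by (simp add: szego_pairing_def reflect_seq_def algebra_simps)
  next
    case False
    then have "i \<le> n"
      using assms(2) by simp
    then have "(\<Sum>k<Suc n. c (int n - int k - int i) * ?b k)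
        = (\<Sum>k<Suc n. reflect_seq c (int k - int (n - i)) * ?b k)"
      by (intro sum.cong) (auto simp: reflect_seq_def of_nat_diff algebra_simps)
    also have "\<dots> = (if n - i = n then toeplitz_ratio c n else 0)"
      using szego_coeff_orthogonal[of "reflect_seq c" n "n - i"] assms(1) by simp
    finally show ?thesis
      using False \<open>i \<le> n\<close> by auto
  qed
  finally show ?thesis .
qed

text \<open>The shifted coefficient vector of degree n and the reversed one for the reflected moments
  solve the Toeplitz system of degree n + 1 except in its first and last equations; by uniqueness,
  the combination of the two that satisfies the first equation is the new coefficient vector.\<close>

lemma szego_coeff_Suc_eq:
  fixes c :: "int \<Rightarrow> 'a::field" and n :: nat
  assumes dets: "\<And>m. det (toeplitz_mat c m) \<noteq> 0"
  defines "t \<equiv> szego_pairing c n / toeplitz_ratio c n"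
  shows "toeplitz_ratio c (Suc n) = toeplitz_ratio c n - t * szego_pairing (reflect_seq c) n"
    and "j \<le> Suc n \<Longrightarrow> szego_coeff c (Suc n) j = (if j = 0 then 0 else szego_coeff c n (j - 1))
           - t * (if j \<le> n then szego_coeff (reflect_seq c) n (n - j) else 0)"
proof -
  have L: "toeplitz_ratio c n \<noteq> 0" "toeplitz_ratio c (Suc n) \<noteq> 0"
    using dets by (simp_all add: toeplitz_ratio_def)
  define l where "l = toeplitz_ratio c n - t * szego_pairing (reflect_seq c) n"
  define w where "w j = (if j = 0 then 0 else szego_coeff c n (j - 1))" for j
  define r where "r j = (if j \<le> n then szego_coeff (reflect_seq c) n (n - j) else 0)" for j
  define v where "v j = w j - t * r j" for j
  have "(\<Sum>k<Suc (Suc n). c (int k - int i) * v k) = (if i = Suc n then l else 0)"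
    if "i \<le> Suc n" for i
  proof -
    have "(\<Sum>k<Suc (Suc n). c (int k - int i) * v k)
        = (\<Sum>k<Suc (Suc n). c (int k - int i) * w k) - t * (\<Sum>k<Suc (Suc n). c (int k - int i) * r k)"
      by (simp add: v_def algebra_simps sum_subtractf sum_distrib_left del: sum.lessThan_Suc)
    then show ?thesis
      using toeplitz_sum_shifted_szego_coeff[OF dets that] toeplitz_sum_reversed_szego_coeff[OF dets that] L
      by (simp add: w_def r_def l_def t_def del: sum.lessThan_Suc)
  qed
  then have v_eq: "v j = l / toeplitz_ratio c (Suc n) * szego_coeff c (Suc n) j" if "j \<le> Suc n" for j
    using dets that by (intro szego_coeff_unique) auto
  have "v (Suc n) = 1"
    using szego_coeff_last[OF dets] by (simp add: v_def w_def r_def)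
  then have l: "l = toeplitz_ratio c (Suc n)"
    using v_eq[of "Suc n"] szego_coeff_last[OF dets] L by (simp add: field_simps)
  then show "toeplitz_ratio c (Suc n) = toeplitz_ratio c n - t * szego_pairing (reflect_seq c) n"
    by (simp add: l_def)
  show "szego_coeff c (Suc n) j = v j" if "j \<le> Suc n"
    using v_eq[OF that] l L by (simp add: v_def w_def r_def)
qed

lemma szego_coeff_Suc_0:
  assumes "\<And>m. det (toeplitz_mat c m) \<noteq> 0"
  shows "szego_coeff c (Suc n) 0 = - szego_pairing c n / toeplitz_ratio c n"
  using szego_coeff_Suc_eq(2)[OF assms, where n=n and j=0] szego_coeff_last[of "reflect_seq c" n] assms
  by simp

lemma toeplitz_ratio_Suc:
  assumes dets: "\<And>m. det (toeplitz_mat c m) \<noteq> 0"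
  shows "toeplitz_ratio c (Suc n)
    = toeplitz_ratio c n * (1 - szego_coeff c (Suc n) 0 * szego_coeff (reflect_seq c) (Suc n) 0)"
proof -
  have "toeplitz_ratio c n \<noteq> 0"
    using dets by (simp add: toeplitz_ratio_def)
  moreover have "szego_coeff (reflect_seq c) (Suc n) 0 = - szego_pairing (reflect_seq c) n / toeplitz_ratio c n"
    using szego_coeff_Suc_0[of "reflect_seq c" n] dets by simp
  ultimately show ?thesis
    unfolding szego_coeff_Suc_eq(1)[OF dets, of n] szego_coeff_Suc_0[OF dets, of n]
    by (simp add: field_simps)
qed

lemma szego_poly_Suc:
  assumes dets: "\<And>m. det (toeplitz_mat c m) \<noteq> 0" and "z \<noteq> 0"
  shows "szego_poly c z (Suc n)
    = szego_poly c z n + szego_coeff c (Suc n) 0 * z ^ Suc n * szego_poly (reflect_seq c) (inverse z) n"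
proof -
  let ?a = "szego_coeff c n" and ?b = "szego_coeff (reflect_seq c) n" and ?\<alpha> = "szego_coeff c (Suc n) 0"
  have "szego_poly c z (Suc n) = (\<Sum>j<Suc (Suc n). ((if j = 0 then 0 else ?a (j - 1))
      + ?\<alpha> * (if j \<le> n then ?b (n - j) else 0)) * z ^ (Suc n - j))"
    unfolding szego_poly_def szego_coeff_Suc_0[OF dets]
    by (intro sum.cong refl) (simp add: szego_coeff_Suc_eq(2)[OF dets])
  also have "\<dots> = (\<Sum>j<Suc (Suc n). (if j = 0 then 0 else ?a (j - 1)) * z ^ (Suc n - j))
      + ?\<alpha> * (\<Sum>j<Suc n. ?b (n - j) * z ^ (Suc n - j))"
    by (simp add: algebra_simps sum.distrib sum_distrib_left if_distrib[of "\<lambda>x. x * _"]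
        del: sum.lessThan_Suc) (simp add: sum.lessThan_Suc[of _ "Suc n"])
  also have "(\<Sum>j<Suc (Suc n). (if j = 0 then 0 else ?a (j - 1)) * z ^ (Suc n - j)) = szego_poly c z n"
    unfolding sum.lessThan_Suc_shift[of _ "Suc n"] by (simp add: szego_poly_def del: sum.lessThan_Suc)
  also have "(\<Sum>j<Suc n. ?b (n - j) * z ^ (Suc n - j)) = (\<Sum>k<Suc n. ?b k * z ^ Suc k)"
    using sum.nat_diff_reindex[of "\<lambda>k. ?b k * z ^ Suc k" "Suc n"]
    by (simp add: Suc_diff_le del: sum.lessThan_Suc)
  also have "\<dots> = z ^ Suc n * szego_poly (reflect_seq c) (inverse z) n"
    unfolding szego_poly_def sum_distrib_left
  proof (intro sum.cong refl)
    fix k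
    assume "k \<in> {..<Suc n}"
    then have "z ^ Suc n = z ^ Suc k * z ^ (n - k)"
      by (simp flip: power_add)
    then show "?b k * z ^ Suc k = z ^ Suc n * (?b k * inverse z ^ (n - k))"
      using \<open>z \<noteq> 0\<close> by (simp add: power_inverse field_simps)
  qed
  finally show ?thesis
    by (simp add: algebra_simps)
qed


section \<open>Moments of a measure on the circle\<close>

lemma toeplitz_det_eq_det_toeplitz_mat: "toeplitz_det c n = det (toeplitz_mat c n)"
  by (simp add: toeplitz_det_def det_toeplitz_mat_transpose)

lemma det_toeplitz_mat_last_row_replaced:
  fixes c :: "int \<Rightarrow> 'a::field"
  assumes "det (toeplitz_mat c n) \<noteq> 0"
  shows "det (mat (Suc n) (Suc n) (\<lambda>(i, j). if i < n then c (int j - int i) else x j))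
    = det (toeplitz_mat c n) * (\<Sum>j<Suc n. x j * szego_coeff c n j)"
proof -
  let ?A = "mat (Suc n) (Suc n) (\<lambda>(i, j). if i < n then c (int j - int i) else x j)"
  have "mat_delete ?A n j = mat_delete (toeplitz_mat c (Suc n)) n j" for j
    by (rule eq_matI) (auto simp: mat_delete_def)
  then have "det ?A = (\<Sum>j<Suc n. x j * cofactor (toeplitz_mat c (Suc n)) n j)"
    using laplace_expansion_row[of ?A "Suc n" n] by (simp add: cofactor_def del: sum.lessThan_Suc)
  then show ?thesis
    using assms by (simp add: szego_coeff_def sum_distrib_left del: sum.lessThan_Suc)
qed

lemma u_poly_eq_szego_poly:
  assumes "\<And>m. det (toeplitz_mat (moment \<nu> h) m) \<noteq> 0"
  shows "u_poly \<nu> h n z = szego_poly (moment \<nu> h) z n / toeplitz_ratio (moment \<nu> h) n"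
  using det_toeplitz_mat_last_row_replaced[of "moment \<nu> h" n "\<lambda>j. z ^ (n - j)"] assms
  by (simp add: u_poly_def Dn_def toeplitz_det_eq_det_toeplitz_mat szego_poly_def toeplitz_ratio_def
      mult.commute del: sum.lessThan_Suc)

lemma power_int_minus_of_nat: "(z::'a::division_ring) powi (- int m) = inverse z ^ m"
  by (simp add: power_int_minus power_inverse)

lemma v_poly_eq_szego_poly:
  assumes "\<And>m. det (toeplitz_mat (moment \<nu> h) m) \<noteq> 0"
  shows "v_poly \<nu> h n z
    = szego_poly (reflect_seq (moment \<nu> h)) (inverse z) n / toeplitz_ratio (moment \<nu> h) n"
proof -
  let ?c = "reflect_seq (moment \<nu> h)"
  have "mat (n + 1) (n + 1) (\<lambda>(i, j). if i < n then moment \<nu> h (int i - int j) else z powi (int j - int n))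
      = mat (Suc n) (Suc n) (\<lambda>(i, j). if i < n then ?c (int j - int i) else inverse z ^ (n - j))"
    by (rule eq_matI) (auto simp: reflect_seq_def power_int_minus_of_nat[symmetric] of_nat_diff)
  then show ?thesis
    using det_toeplitz_mat_last_row_replaced[of ?c n "\<lambda>j. inverse z ^ (n - j)"] assms
    by (simp add: v_poly_def Dn_def toeplitz_det_eq_det_toeplitz_mat szego_poly_def toeplitz_ratio_def
        mult.commute del: sum.lessThan_Suc)
qed

lemma moment_cong:
  assumes mu: "cmeasure_on_circle \<nu> h" and g: "g \<in> borel_measurable borel"
    and eq: "\<And>\<zeta>. \<zeta> \<noteq> 0 \<Longrightarrow> \<zeta> powi (- k) * g \<zeta> = \<zeta> powi (- k') * h \<zeta>"
  shows "moment \<nu> g k = moment \<nu> h k'"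
proof -
  have sets: "sets \<nu> = sets borel" and null: "emeasure \<nu> (- sphere 0 1) = 0"
    and h: "integrable \<nu> h"
    using mu unfolding cmeasure_on_circle_def by auto
  have measurable: "borel_measurable \<nu> = borel_measurable borel"
    by (rule measurable_cong_sets[OF sets refl])
  have powi: "(\<lambda>\<zeta>::complex. \<zeta> powi m) \<in> borel_measurable borel" for m
  proof (cases "m \<ge> 0")
    case True
    then have "(\<lambda>\<zeta>::complex. \<zeta> powi m) = (\<lambda>\<zeta>. \<zeta> ^ nat m)"
      by (auto simp: power_int_def)
    then show ?thesis
      by simp
  next
    case False
    then have "(\<lambda>\<zeta>::complex. \<zeta> powi m) = (\<lambda>\<zeta>. inverse \<zeta> ^ nat (- m))"
      by (auto simp: power_int_def)
    then show ?thesis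
      by simp
  qed
  have "AE \<zeta> in \<nu>. \<zeta> \<noteq> 0"
  proof (rule AE_I'[of "- sphere 0 1"])
    show "- sphere (0::complex) 1 \<in> null_sets \<nu>"
      using null_setsI[OF null] borel_open[OF open_Compl[OF closed_sphere]] sets by simp
  qed auto
  then have "AE \<zeta> in \<nu>. \<zeta> powi - k * g \<zeta> = \<zeta> powi - k' * h \<zeta>"
    by eventually_elim (rule eq)
  moreover have "(\<lambda>\<zeta>. \<zeta> powi - k * g \<zeta>) \<in> borel_measurable \<nu>"
    unfolding measurable using g powi[of "- k"] by (intro borel_measurable_times) auto
  moreover have "(\<lambda>\<zeta>. \<zeta> powi - k' * h \<zeta>) \<in> borel_measurable \<nu>"
    using borel_measurable_integrable[OF h] powi[of "- k'"] unfolding measurable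
    by (intro borel_measurable_times) auto
  ultimately show ?thesis
    unfolding moment_def by (intro integral_cong_AE)
qed

lemma borel_measurable_density:
  assumes "cmeasure_on_circle \<nu> h"
  shows "h \<in> borel_measurable borel"
proof -
  have "sets \<nu> = sets borel" "integrable \<nu> h"
    using assms by (auto simp: cmeasure_on_circle_def)
  then show ?thesis
    using borel_measurable_integrable measurable_cong_sets by metis
qed

lemma baxter_alpha_eq_szego_coeff:
  assumes "cmeasure_on_circle \<nu> h"
  shows "baxter_alpha \<nu> h n = szego_coeff (moment \<nu> h) n 0"
proof -
  have "moment \<nu> (\<lambda>\<zeta>. inverse \<zeta> * h \<zeta>) k = moment \<nu> h (k + 1)" for k
  proof (rule moment_cong[OF assms])
    show "(\<lambda>\<zeta>. inverse \<zeta> * h \<zeta>) \<in> borel_measurable borel"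
      using borel_measurable_density[OF assms] by measurable
    fix \<zeta> :: complex
    assume "\<zeta> \<noteq> 0"
    then have "\<zeta> powi (- (k + 1)) = \<zeta> powi (- k) / \<zeta>"
      using power_int_diff[of \<zeta> "- k" 1] by simp
    then show "\<zeta> powi - k * (inverse \<zeta> * h \<zeta>) = \<zeta> powi - (k + 1) * h \<zeta>"
      by (simp add: field_simps)
  qed
  then show ?thesis
    by (simp add: baxter_alpha_def szego_coeff_0 Dn_def toeplitz_det_eq_det_toeplitz_mat
        toeplitz_mat_def)
qed

lemma baxter_beta_eq_szego_coeff:
  assumes "cmeasure_on_circle \<nu> h"
  shows "baxter_beta \<nu> h n = szego_coeff (reflect_seq (moment \<nu> h)) n 0"
proof -
  have "moment \<nu> (\<lambda>\<zeta>. \<zeta> * h \<zeta>) k = moment \<nu> h (k - 1)" for k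
  proof (rule moment_cong[OF assms])
    show "(\<lambda>\<zeta>. \<zeta> * h \<zeta>) \<in> borel_measurable borel"
      using borel_measurable_density[OF assms] by measurable
    fix \<zeta> :: complex
    assume "\<zeta> \<noteq> 0"
    then have "\<zeta> powi (- (k - 1)) = \<zeta> powi (- k) * \<zeta>"
      using power_int_add_1[of \<zeta> "- k"] by simp
    then show "\<zeta> powi - k * (\<zeta> * h \<zeta>) = \<zeta> powi - (k - 1) * h \<zeta>"
      by (simp add: field_simps)
  qed
  then have "moment \<nu> (\<lambda>\<zeta>. \<zeta> * h \<zeta>) = (\<lambda>k. moment \<nu> h (k - 1))"
    by (simp add: fun_eq_iff)
  moreover have "det (mat n n (\<lambda>(i, j). reflect_seq (moment \<nu> h) (int j - int i + 1)))
      = det (toeplitz_mat (\<lambda>k. moment \<nu> h (k - 1)) n)"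
    using det_toeplitz_mat_transpose[where c="\<lambda>k. moment \<nu> h (k - 1)" and n=n]
    by (simp add: reflect_seq_def algebra_simps)
  ultimately show ?thesis
    by (simp add: baxter_beta_def szego_coeff_0 Dn_def toeplitz_det_eq_det_toeplitz_mat)
qed

lemma norm_tail_sum_eq_norm_q21:
  assumes "cmod z = 1" and "summable (\<lambda>j. a (k + 1 + j) * z ^ (j + 1))"
  shows "norm (tail_sum (\<lambda>k. a k * z ^ k) k) = norm (q21 a z k)"
proof -
  have "tail_sum (\<lambda>k. a k * z ^ k) k = (\<Sum>j. z ^ k * (a (k + 1 + j) * z ^ (j + 1)))"
    unfolding tail_sum_def by (intro suminf_cong) (simp add: power_add algebra_simps)
  also have "\<dots> = z ^ k * (\<Sum>j. a (k + 1 + j) * z ^ (j + 1))"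
    by (rule suminf_mult[OF assms(2)])
  finally show ?thesis
    using assms(1) by (simp add: q21_def norm_mult norm_power)
qed

lemma q21_tilde_eq_q21_inverse: "q21_tilde b z k = q21 b (inverse z) k"
  unfolding q21_tilde_def q21_def power_int_minus_of_nat ..

lemma set_M_swap: "inverse z \<in> set_M \<beta> \<alpha> \<longleftrightarrow> z \<in> set_M \<alpha> \<beta>"
  unfolding set_M_def power_int_minus_of_nat by (auto simp: norm_inverse)

lemma set_E_tilde_eq_set_E_inverse: "z \<in> set_E_tilde \<alpha> \<beta> \<longleftrightarrow> inverse z \<in> set_E \<beta> \<alpha>"
  unfolding set_E_def set_E_tilde_def power_int_minus_of_nat q21_tilde_eq_q21_inverse
  by (auto simp: norm_inverse)

lemma convergent_szego_poly_on_circle: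
  fixes c :: "int \<Rightarrow> complex"
  assumes dets: "\<And>m. det (toeplitz_mat c m) \<noteq> 0"
    and \<alpha>: "\<And>n. \<alpha> n = szego_coeff c n 0" and \<beta>: "\<And>n. \<beta> n = szego_coeff (reflect_seq c) n 0"
    and summable_\<alpha>\<beta>: "summable (\<lambda>n. norm (\<alpha> n * \<beta> n))"
    and z: "z \<in> set_M \<alpha> \<beta>" "z \<in> set_E \<alpha> \<beta>"
  shows "convergent (\<lambda>n. szego_poly c z n)"
proof -
  define A where "A = (\<lambda>k. \<alpha> k * z ^ k)"
  define B where "B = (\<lambda>k. \<beta> k * inverse z ^ k)"
  define p where "p n = szego_poly c z n" for n
  define q where "q n = szego_poly (reflect_seq c) (inverse z) n" for n
  have "cmod z = 1"
    using z(1) by (simp add: set_M_def)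
  then have "z \<noteq> 0"
    by auto
  have "p (Suc n) = p n + A (Suc n) * q n" for n
    using szego_poly_Suc[OF dets \<open>z \<noteq> 0\<close>] by (simp add: p_def q_def A_def \<alpha> algebra_simps)
  moreover have "q (Suc n) = q n + B (Suc n) * p n" for n
    using szego_poly_Suc[of "reflect_seq c" "inverse z" n] dets \<open>z \<noteq> 0\<close>
    by (simp add: p_def q_def B_def \<beta> algebra_simps)
  moreover have "summable (\<lambda>k. A (Suc k))" "summable (\<lambda>k. B (Suc k))"
    using z(1) unfolding set_M_def power_int_minus_of_nat by (simp_all add: A_def B_def)
  then have "summable A" "summable B"
    by (simp_all add: summable_Suc_iff)
  moreover have "summable (\<lambda>n. norm (A n * B n))"
    using summable_\<alpha>\<beta> \<open>cmod z = 1\<close> by (simp add: A_def B_def norm_mult norm_power norm_inverse)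
  moreover have "norm (B (Suc n) * tail_sum A n) = norm (\<beta> (n + 1) * q21 \<alpha> z n)" for n
    using z(2) \<open>cmod z = 1\<close> norm_tail_sum_eq_norm_q21[of z \<alpha> n]
    by (simp add: set_E_def A_def B_def norm_mult norm_power norm_inverse)
  then have "summable (\<lambda>n. norm (B (Suc n) * tail_sum A n))"
    using z(2) by (simp add: set_E_def)
  ultimately have "coupled_recurrence p q A B"
    by unfold_locales
  then show ?thesis
    unfolding p_def[symmetric] by (rule coupled_recurrence.convergent_p)
qed

theorem mainTheorem3:
  fixes \<nu> :: "complex measure" and h :: "complex \<Rightarrow> complex"
  assumes mu: "cmeasure_on_circle \<nu> h"
    and D_nonzero: "\<And>n. n \<ge> 1 \<Longrightarrow> Dn \<nu> h n \<noteq> 0"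
    and alpha_l2: "summable (\<lambda>n. (cmod (baxter_alpha \<nu> h n))\<^sup>2)"
    and beta_l2: "summable (\<lambda>n. (cmod (baxter_beta \<nu> h n))\<^sup>2)"
  shows "(\<forall>\<theta>::real. exp (\<i> * of_real \<theta>) \<in> set_E (baxter_alpha \<nu> h) (baxter_beta \<nu> h)
                       \<inter> set_M (baxter_alpha \<nu> h) (baxter_beta \<nu> h) \<longrightarrow>
           (\<exists>L. (\<lambda>n. u_poly \<nu> h n (exp (\<i> * of_real \<theta>))) \<longlonglongrightarrow> L))
       \<and> (\<forall>\<theta>::real. exp (\<i> * of_real \<theta>) \<in> set_E_tilde (baxter_alpha \<nu> h) (baxter_beta \<nu> h)
                       \<inter> set_M (baxter_alpha \<nu> h) (baxter_beta \<nu> h) \<longrightarrow>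
           (\<exists>L. (\<lambda>n. v_poly \<nu> h n (exp (\<i> * of_real \<theta>))) \<longlonglongrightarrow> L))"
proof -
  define c where "c = moment \<nu> h"
  have dets: "det (toeplitz_mat c m) \<noteq> 0" for m
    using D_nonzero[of m] by (cases m) (simp_all add: c_def Dn_def toeplitz_det_eq_det_toeplitz_mat)
  note \<alpha> = baxter_alpha_eq_szego_coeff[OF mu, folded c_def]
  note \<beta> = baxter_beta_eq_szego_coeff[OF mu, folded c_def]
  have \<alpha>\<beta>: "summable (\<lambda>n. norm (baxter_alpha \<nu> h n * baxter_beta \<nu> h n))"
    using alpha_l2 beta_l2 by (rule summable_norm_mult_if_square_summable)
  have ratio: "convergent (\<lambda>n. inverse (toeplitz_ratio c n))"
    using dets \<alpha>\<beta> summable_Suc_iff[of "\<lambda>n. norm (baxter_alpha \<nu> h n * baxter_beta \<nu> h n)"]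
    by (intro convergent_inverse_if_product_recurrence[where g = "toeplitz_ratio c"
          and t = "\<lambda>n. szego_coeff c (Suc n) 0 * szego_coeff (reflect_seq c) (Suc n) 0"]
        toeplitz_ratio_Suc) (simp_all add: \<alpha> \<beta> toeplitz_ratio_def)
  have u: "(\<lambda>n. u_poly \<nu> h n z) = (\<lambda>n. szego_poly c z n * inverse (toeplitz_ratio c n))"
    and v: "(\<lambda>n. v_poly \<nu> h n z)
      = (\<lambda>n. szego_poly (reflect_seq c) (inverse z) n * inverse (toeplitz_ratio c n))" for z
    using u_poly_eq_szego_poly v_poly_eq_szego_poly dets by (simp_all add: c_def divide_inverse)
  have "convergent (\<lambda>n. szego_poly c z n)"
    if "z \<in> set_E (baxter_alpha \<nu> h) (baxter_beta \<nu> h) \<inter> set_M (baxter_alpha \<nu> h) (baxter_beta \<nu> h)" for z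
    using that by (intro convergent_szego_poly_on_circle[OF dets \<alpha> \<beta> \<alpha>\<beta>]) auto
  moreover have "convergent (\<lambda>n. szego_poly (reflect_seq c) (inverse z) n)"
    if "z \<in> set_E_tilde (baxter_alpha \<nu> h) (baxter_beta \<nu> h) \<inter> set_M (baxter_alpha \<nu> h) (baxter_beta \<nu> h)"
    for z
    using that dets \<alpha>\<beta>
    by (intro convergent_szego_poly_on_circle[where \<alpha> = "baxter_beta \<nu> h" and \<beta> = "baxter_alpha \<nu> h"])
      (auto simp: \<alpha> \<beta> set_M_swap set_E_tilde_eq_set_E_inverse mult.commute)
  ultimately show ?thesis
    unfolding convergent_def[symmetric] u v using ratio by (auto intro: convergent_mult)
qed

end
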